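(* Let $n$ be a natural number, let $g,d$ be annotated terms, and let $M$ be a correct memo map. Write $(b,M'')=\mathrm{decideMemo}(n,g,d,M)$. Then: 1. $M''$ is a correct memo map; and 2. if $b=\mathrm{true}$, then there exists a natural number $k$ with $\mathrm{decide}(k,g,d)=\mathrm{true}$.
   Context: Terms are generated by the grammar $t ::= \mathrm{Var}(k) \mid \mathrm{Meet}(t,t) \mid \mathrm{Join}(t,t) \mid \mathrm{Not}(t)$, where $k$ ranges over positive integers. An annotated term is either $N$, $L\,t$ or $R\,t$ for a term $t$. The fuel-bounded proof-search function $\mathrm{decide}(n,g,d)\in\{\mathrm{true},\mathrm{false}\}$ is defined recursively. First, $\mathrm{decide}(0,g,d)=\mathrm{false}$. Second, $\mathrm{decide}(n+1,g,d)=\mathrm{true}$ iff at least one of the following holds, where every recursive call uses fuel $n$: - $g=L\,\mathrm{Var}(a)$ and $d=R\,\mathrm{Var}(a)$; - $\mathrm{decide}(n,g,N)$; - $d=N$ and $\mathrm{decide}(n,g,g)$; - $g=L\,\mathrm{Meet}(a,b)$ and $\mathrm{decide}(n,L\,a,d)$; - $g=L\,\mathrm{Meet}(a,b)$ and $\mathrm{decide}(n,L\,b,d)$; - $g=L\,\mathrm{Join}(a,b)$ and both $\mathrm{decide}(n,L\,a,d)$ and $\mathrm{decide}(n,L\,b,d)$; - $g=L\,\mathrm{Not}(a)$ and $\mathrm{decide}(n,R\,a,d)$; - $g=R\,\mathrm{Join}(a,b)$ and $\mathrm{decide}(n,R\,a,d)$; - $g=R\,\mathrm{Join}(a,b)$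 and $\mathrm{decide}(n,R\,b,d)$; - $g=R\,\mathrm{Meet}(a,b)$ and both $\mathrm{decide}(n,R\,a,d)$ and $\mathrm{decide}(n,R\,b,d)$; - $g=R\,\mathrm{Not}(a)$ and $\mathrm{decide}(n,L\,a,d)$; - $\mathrm{decide}(n,d,g)$. A memo map is a finite partial function $M$ from pairs of annotated terms to $\{\mathrm{true},\mathrm{false}\}$. The memo map $M$ is correct if for every pair $(g',d')$ with $M(g',d')=\mathrm{true}$ there exists $k$ with $\mathrm{decide}(k,g',d')=\mathrm{true}$. In particular, the empty map is correct. The memoized search $\mathrm{decideMemo}(n,g,d,M)$ returns a pair consisting of a boolean and a memo map, and is defined as follows. - If $M(g,d)$ is defined and equal to $b$, it returns $(b,M)$. - Otherwise it computes a pair $(b,M')$ and returns $(b,M'[(g,d)\mapsto b])$. Here $M'[(g,d)\mapsto b]$ is $M'$ updated so that $(g,d)$ is mapped to $b$. The pair $(b,M')$ is computed as follows. - If $n=0$, then $(b,M')=(\mathrm{false},M)$. - If $n=m+1$, it is obtained by evaluating the same disjunction of cases as in the definition of $\mathrm{decide}(m+1,g,d)$, in the same order. Each recursive call $\mathrm{decide}(m,g_1,d_1)$ is replaced by $\mathrm{decideMemo}(m,g_1,d_1,\cdot)$, and the memo map is threaded sequentially as follows: - A case whose pattern condition on $g,d$ fails yields $(\mathrm{false},\text{current map})$. - For a disjunction $A\vee B$: run $A$ on the current map, getting $(x,M_1)$. If $x=\mathrm{true}$, the result is $(\mathrm{true},M_1)$; otherwise the result is that of running $B$ on $M_1$. -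 For a conjunction $A\wedge B$: run $A$ on the current map, getting $(x,M_1)$. If $x=\mathrm{false}$, the result is $(\mathrm{false},M_1)$; otherwise the result is that of running $B$ on $M_1$. *)

theory Defs
  imports Main
begin

datatype tm = Var nat | Meet tm tm | Join tm tm | Not tm

datatype ann = N | L tm | R tm

fun decide :: "nat \<Rightarrow> ann \<Rightarrow> ann \<Rightarrow> bool" where
  "decide 0 g d = False"
| "decide (Suc n) g d =
     ((case (g, d) of (L (Var a), R (Var b)) \<Rightarrow> a = b | _ \<Rightarrow> False)
    \<or> decide n g N
    \<or> (d = N \<and> decide n g g)
    \<or> (case g of L (Meet a b) \<Rightarrow> decide n (L a) d | _ \<Rightarrow> False)
    \<or> (case g of L (Meet a b) \<Rightarrow> decide n (L b) d | _ \<Rightarrow> False)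
    \<or> (case g of L (Join a b) \<Rightarrow> decide n (L a) d \<and> decide n (L b) d | _ \<Rightarrow> False)
    \<or> (case g of L (Not a) \<Rightarrow> decide n (R a) d | _ \<Rightarrow> False)
    \<or> (case g of R (Join a b) \<Rightarrow> decide n (R a) d | _ \<Rightarrow> False)
    \<or> (case g of R (Join a b) \<Rightarrow> decide n (R b) d | _ \<Rightarrow> False)
    \<or> (case g of R (Meet a b) \<Rightarrow> decide n (R a) d \<and> decide n (R b) d | _ \<Rightarrow> False)
    \<or> (case g of R (Not a) \<Rightarrow> decide n (L a) d | _ \<Rightarrow> False)
    \<or> decide n d g)"

type_synonym memo = "(ann \<times> ann) \<Rightarrow> bool option"

definition memo_correct :: "memo \<Rightarrow> bool" where
  "memo_correct M \<longleftrightarrow> (\<forall>g' d'. M (g', d') = Some True \<longrightarrow> (\<exists>k. decide k g' d'))"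

definition mor :: "(memo \<Rightarrow> bool \<times> memo) \<Rightarrow> (memo \<Rightarrow> bool \<times> memo) \<Rightarrow> memo \<Rightarrow> bool \<times> memo" where
  "mor A B M = (case A M of (x, M1) \<Rightarrow> if x then (True, M1) else B M1)"

definition mand :: "(memo \<Rightarrow> bool \<times> memo) \<Rightarrow> (memo \<Rightarrow> bool \<times> memo) \<Rightarrow> memo \<Rightarrow> bool \<times> memo" where
  "mand A B M = (case A M of (x, M1) \<Rightarrow> if x then B M1 else (False, M1))"

definition mfail :: "memo \<Rightarrow> bool \<times> memo" where
  "mfail M = (False, M)"

fun decideMemo :: "nat \<Rightarrow> ann \<Rightarrow> ann \<Rightarrow> memo \<Rightarrow> bool \<times> memo" where
  "decideMemo n g d M =
    (case M (g, d) of
       Some b \<Rightarrow> (b, M)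
     | None \<Rightarrow>
        (case (case n of
              0 \<Rightarrow> (False, M)
            | Suc m \<Rightarrow>
                (mor (\<lambda>M. ((case (g, d) of (L (Var a), R (Var b)) \<Rightarrow> a = b | _ \<Rightarrow> False), M))
                (mor (decideMemo m g N)
                (mor (if d = N then decideMemo m g g else mfail)
                (mor (case g of L (Meet a b) \<Rightarrow> decideMemo m (L a) d | _ \<Rightarrow> mfail)
                (mor (case g of L (Meet a b) \<Rightarrow> decideMemo m (L b) d | _ \<Rightarrow> mfail)
                (mor (case g of L (Join a b) \<Rightarrow> mand (decideMemo m (L a) d) (decideMemo m (L b) d) | _ \<Rightarrow> mfail)
                (mor (case g of L (Not a) \<Rightarrow> decideMemo m (R a) d | _ \<Rightarrow> mfail)
                (mor (case g of R (Join a b) \<Rightarrow> decideMemo m (R a) d | _ \<Rightarrow> mfail)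
                (mor (case g of R (Join a b) \<Rightarrow> decideMemo m (R b) d | _ \<Rightarrow> mfail)
                (mor (case g of R (Meet a b) \<Rightarrow> mand (decideMemo m (R a) d) (decideMemo m (R b) d) | _ \<Rightarrow> mfail)
                (mor (case g of R (Not a) \<Rightarrow> decideMemo m (L a) d | _ \<Rightarrow> mfail)
                     (decideMemo m d g))))))))))) M)) of
           (b, M') \<Rightarrow> (b, M'((g, d) := Some b))))"

end

theory Submission
  imports Defs
begin

(* A round of decide is a monotone operator on its previous round, so fuel is monotone,
   and as a round consults only finitely many premises the pairs decided for some fuel
   ("derivable") are closed under a round.  decideMemo performs the same round with the
   recursive calls memoised; the invariant "preserves memo correctness, and a true result
   is derivable" is stable under the short-circuit combinators, under a memo lookup and
   under the memo update, so it holds for decideMemo by induction on the fuel. *)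

definition search_step :: "(ann \<Rightarrow> ann \<Rightarrow> bool) \<Rightarrow> ann \<Rightarrow> ann \<Rightarrow> bool" where
 "search_step P g d =
     ((case (g, d) of (L (Var a), R (Var b)) \<Rightarrow> a = b | _ \<Rightarrow> False)
    \<or> P g N
    \<or> (d = N \<and> P g g)
    \<or> (case g of L (Meet a b) \<Rightarrow> P (L a) d | _ \<Rightarrow> False)
    \<or> (case g of L (Meet a b) \<Rightarrow> P (L b) d | _ \<Rightarrow> False)
    \<or> (case g of L (Join a b) \<Rightarrow> P (L a) d \<and> P (L b) d | _ \<Rightarrow> False)
    \<or> (case g of L (Not a) \<Rightarrow> P (R a) d | _ \<Rightarrow> False)
    \<or> (case g of R (Join a b) \<Rightarrow> P (R a) d | _ \<Rightarrow> False)
    \<or> (case g of R (Join a b) \<Rightarrow> P (R b) d | _ \<Rightarrow> False)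
    \<or> (case g of R (Meet a b) \<Rightarrow> P (R a) d \<and> P (R b) d | _ \<Rightarrow> False)
    \<or> (case g of R (Not a) \<Rightarrow> P (L a) d | _ \<Rightarrow> False)
    \<or> P d g)"

lemma decide_Suc_eq_search_step: "decide (Suc n) g d = search_step (decide n) g d"
  unfolding search_step_def by (simp only: decide.simps)

lemma search_step_mono:
  assumes "\<And>x y. P x y \<Longrightarrow> Q x y" and "search_step P g d"
  shows "search_step Q g d"
  using assms unfolding search_step_def by (auto split: ann.splits tm.splits)

lemma search_step_eventually:
  assumes "search_step (\<lambda>x y. eventually (\<lambda>k. Q k x y) F) g d"
  shows "eventually (\<lambda>k. search_step (Q k) g d) F"
  using assms unfolding search_step_def
  by (cases g; cases d; simp split: tm.splits)
     (auto elim: eventually_mono eventually_elim2, (smt (verit) eventually_mono)+)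

lemma decide_Suc: "decide n g d \<Longrightarrow> decide (Suc n) g d"
proof (induction n arbitrary: g d)
  case 0
  then show ?case by simp
next
  case (Suc n)
  have step: "search_step (decide n) g d"
    using Suc.prems by (simp only: decide_Suc_eq_search_step)
  have "search_step (decide (Suc n)) g d"
    using Suc.IH step by (rule search_step_mono)
  then show ?case
    by (simp only: decide_Suc_eq_search_step)
qed

lemma decide_mono: "decide n g d \<Longrightarrow> n \<le> m \<Longrightarrow> decide m g d"
  by (induction m) (auto simp del: decide.simps intro: decide_Suc simp: le_Suc_eq)

definition derivable :: "ann \<Rightarrow> ann \<Rightarrow> bool" where
  "derivable g d \<longleftrightarrow> (\<exists>k. decide k g d)"

lemma derivable_iff_eventually: "derivable g d \<longleftrightarrow> eventually (\<lambda>k. decide k g d) sequentially"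
  unfolding derivable_def eventually_sequentially
  by (auto intro: decide_mono)

lemma derivable_search_step:
  assumes "search_step derivable g d"
  shows "derivable g d"
proof -
  have "eventually (\<lambda>k. search_step (decide k) g d) sequentially"
    using assms unfolding derivable_iff_eventually by (rule search_step_eventually)
  then have "eventually (\<lambda>k. decide (Suc k) g d) sequentially"
    by (simp only: decide_Suc_eq_search_step)
  then show ?thesis
    unfolding derivable_iff_eventually by (rule eventually_sequentially_Suc[THEN iffD1])
qed

lemma memo_correct_iff: "memo_correct M \<longleftrightarrow> (\<forall>g d. M (g, d) = Some True \<longrightarrow> derivable g d)"
  unfolding memo_correct_def derivable_def ..

definition memo_sound :: "(memo \<Rightarrow> bool \<times> memo) \<Rightarrow> bool \<Rightarrow> bool" where
  "memo_sound f Q \<longleftrightarrow> (\<forall>M. memo_correct M \<longrightarrow> memo_correct (snd (f M)) \<and> (fst (f M) \<longrightarrow> Q))"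

lemma memo_sound_weaken: "memo_sound f P \<Longrightarrow> (P \<Longrightarrow> Q) \<Longrightarrow> memo_sound f Q"
  unfolding memo_sound_def by auto

lemma memo_sound_const: "memo_sound (\<lambda>M. (c, M)) c"
  unfolding memo_sound_def by auto

lemma memo_sound_mfail: "memo_sound mfail Q"
  unfolding memo_sound_def mfail_def by auto

lemma memo_sound_mor: "memo_sound A P \<Longrightarrow> memo_sound B Q \<Longrightarrow> memo_sound (mor A B) (P \<or> Q)"
  unfolding memo_sound_def mor_def by (auto split: prod.split)

lemma memo_sound_mand: "memo_sound A P \<Longrightarrow> memo_sound B Q \<Longrightarrow> memo_sound (mand A B) (P \<and> Q)"
  unfolding memo_sound_def mand_def by (auto split: prod.split)

definition memo_search_step ::
    "(ann \<Rightarrow> ann \<Rightarrow> memo \<Rightarrow> bool \<times> memo) \<Rightarrow> ann \<Rightarrow> ann \<Rightarrow> memo \<Rightarrow> bool \<times> memo" where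
  "memo_search_step r g d =
     mor (\<lambda>M. ((case (g, d) of (L (Var a), R (Var b)) \<Rightarrow> a = b | _ \<Rightarrow> False), M))
    (mor (r g N)
    (mor (if d = N then r g g else mfail)
    (mor (case g of L (Meet a b) \<Rightarrow> r (L a) d | _ \<Rightarrow> mfail)
    (mor (case g of L (Meet a b) \<Rightarrow> r (L b) d | _ \<Rightarrow> mfail)
    (mor (case g of L (Join a b) \<Rightarrow> mand (r (L a) d) (r (L b) d) | _ \<Rightarrow> mfail)
    (mor (case g of L (Not a) \<Rightarrow> r (R a) d | _ \<Rightarrow> mfail)
    (mor (case g of R (Join a b) \<Rightarrow> r (R a) d | _ \<Rightarrow> mfail)
    (mor (case g of R (Join a b) \<Rightarrow> r (R b) d | _ \<Rightarrow> mfail)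
    (mor (case g of R (Meet a b) \<Rightarrow> mand (r (R a) d) (r (R b) d) | _ \<Rightarrow> mfail)
    (mor (case g of R (Not a) \<Rightarrow> r (L a) d | _ \<Rightarrow> mfail)
         (r d g)))))))))))"

lemma memo_sound_memo_search_step:
  assumes "\<And>x y. memo_sound (r x y) (P x y)"
  shows "memo_sound (memo_search_step r g d) (search_step P g d)"
  unfolding memo_search_step_def search_step_def
  by (intro memo_sound_mor memo_sound_const)
     (auto simp: assms memo_sound_mfail memo_sound_mand split: ann.split tm.split)

definition memoized :: "ann \<Rightarrow> ann \<Rightarrow> (memo \<Rightarrow> bool \<times> memo) \<Rightarrow> memo \<Rightarrow> bool \<times> memo" where
  "memoized g d f M =
     (case M (g, d) of
        Some b \<Rightarrow> (b, M)
      | None \<Rightarrow> (case f M of (b, M') \<Rightarrow> (b, M'((g, d) := Some b))))"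

lemma decideMemo_eq_memoized:
  "decideMemo n g d =
     memoized g d (case n of 0 \<Rightarrow> (\<lambda>M. (False, M)) | Suc m \<Rightarrow> memo_search_step (decideMemo m) g d)"
  by (rule ext, cases n) (simp_all only: decideMemo.simps memoized_def memo_search_step_def nat.case)

lemma memo_sound_memoized:
  assumes "memo_sound f (derivable g d)"
  shows "memo_sound (memoized g d f) (derivable g d)"
  using assms unfolding memo_sound_def memoized_def memo_correct_iff
  by (auto split: option.split prod.split)

lemma memo_sound_decideMemo: "memo_sound (decideMemo n g d) (derivable g d)"
proof (induction n arbitrary: g d)
  case 0
  show ?case
    unfolding decideMemo_eq_memoized[of 0]
    by (auto intro: memo_sound_memoized memo_sound_weaken[OF memo_sound_const])
next
  case (Suc m)
  have "memo_sound (memo_search_step (decideMemo m) g d) (derivable g d)"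
    using memo_sound_memo_search_step[OF Suc.IH] derivable_search_step
    by (rule memo_sound_weaken)
  then show ?case
    unfolding decideMemo_eq_memoized[of "Suc m"] by (simp add: memo_sound_memoized)
qed

theorem mainTheorem3:
  fixes n :: nat and g d :: ann and M :: memo
  assumes "memo_correct M"
  shows "memo_correct (snd (decideMemo n g d M))
       \<and> (fst (decideMemo n g d M) \<longrightarrow> (\<exists>k. decide k g d))"
  using memo_sound_decideMemo[of n g d] assms unfolding memo_sound_def derivable_def by blast

end
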